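(* Let $M$ be a real $n\times n$ matrix, $n\ge2$. If $M^{[2]}$ is a $P_0$-matrix, then no nonreal eigenvalue of $M$ lies in the open left half-plane $\mathbb{C}_-$. If $-M^{[2]}$ is a $P_0$-matrix, then no nonreal eigenvalue of $M$ lies in the open right half-plane $\mathbb{C}_+$.
   Context: A square real matrix is a $P_0$-matrix if all its principal minors are nonnegative. For $M\in\mathbb{R}^{n\times n}$, $M^{[2]}$ is the second additive compound: the matrix of $u\wedge v\mapsto Mu\wedge v+u\wedge Mv$ on $\Lambda^2\mathbb{R}^n$ with respect to the basis $e_i\wedge e_j$ ($i<j$) in lexicographic order. *)

theory Defs
  imports "Jordan_Normal_Form.Char_Poly" "Jordan_Normal_Form.DL_Submatrix"
begin

definition P0_matrix :: "real mat \<Rightarrow> bool" where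
  "P0_matrix A \<longleftrightarrow> dim_row A = dim_col A \<and>
     (\<forall>I. I \<subseteq> {0..<dim_row A} \<longrightarrow> I \<noteq> {} \<longrightarrow> det (submatrix A I I) \<ge> 0)"

definition pairs2 :: "nat \<Rightarrow> (nat \<times> nat) list" where
  "pairs2 n = concat (map (\<lambda>i. map (\<lambda>j. (i, j)) [Suc i..<n]) [0..<n])"

text \<open>Coefficient of e_i wedge e_j (i<j) in M e_q wedge e_r + e_q wedge M e_r.\<close>
definition compound2_entry :: "real mat \<Rightarrow> nat \<times> nat \<Rightarrow> nat \<times> nat \<Rightarrow> real" where
  "compound2_entry M ij qr = (case ij of (i, j) \<Rightarrow> case qr of (q, r) \<Rightarrow>
      (if r = j then M $$ (i, q) else 0) - (if r = i then M $$ (j, q) else 0)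
    + (if q = i then M $$ (j, r) else 0) - (if q = j then M $$ (i, r) else 0))"

definition compound2 :: "real mat \<Rightarrow> real mat" where
  "compound2 M = (let n = dim_row M; P = pairs2 n in
     mat (length P) (length P) (\<lambda>(k, l). compound2_entry M (P ! k) (P ! l)))"

end

theory Submission
  imports Defs
begin

text \<open>
  If \<open>z = a + i b\<close> with \<open>b \<noteq> 0\<close> is an eigenvalue of \<open>M\<close> with eigenvector \<open>x + i y\<close>,
  then \<open>M x = a x - b y\<close> and \<open>M y = a y + b x\<close>. Since \<open>b \<noteq> 0\<close>, the vectors \<open>x, y\<close>
  are linearly independent, so \<open>x \<and> y \<noteq> 0\<close>, and
  \<open>M^[2] (x \<and> y) = M x \<and> y + x \<and> M y = 2 a (x \<and> y)\<close>:
  the real number \<open>2 Re z\<close> is an eigenvalue of \<open>M^[2]\<close>.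
  On the other hand a \<open>P\<^sub>0\<close>-matrix \<open>A\<close> has no negative eigenvalue: expanding
  \<open>det (A + diag e)\<close> in the diagonal shifts \<open>e \<ge> 0\<close> gives a sum of principal minors
  of \<open>A\<close> times products of shifts, whence \<open>det (A + t I) \<ge> t^N > 0\<close> for \<open>t > 0\<close>.
  It remains to apply this to \<open>M^[2]\<close> and to \<open>- M^[2]\<close>.
\<close>

section \<open>\<open>P\<^sub>0\<close>-matrices have no negative eigenvalues\<close>

definition principal_plus_diag ::
    "'a :: comm_ring_1 mat \<Rightarrow> nat \<Rightarrow> (nat \<Rightarrow> nat) \<Rightarrow> (nat \<Rightarrow> 'a) \<Rightarrow> 'a mat" where
  "principal_plus_diag A m f e = mat m m (\<lambda>(i, j). A $$ (f i, f j) + (if i = j then e i else 0))"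

text \<open>Unlike \<^const>\<open>P0_matrix\<close>, principal submatrices are indexed by increasing
  enumerations \<open>f\<close> of their index sets rather than by the sets themselves, so that deleting
  a row and column again yields one.\<close>
definition nonneg_principal_minors :: "'a :: linordered_idom mat \<Rightarrow> nat \<Rightarrow> bool" where
  "nonneg_principal_minors A n \<longleftrightarrow>
     (\<forall>m f. 0 < m \<longrightarrow> strict_mono_on {..<m} f \<longrightarrow> f ` {..<m} \<subseteq> {..<n} \<longrightarrow>
        det (principal_plus_diag A m f (\<lambda>_. 0)) \<ge> 0)"

lemma principal_plus_diag_carrier [simp]: "principal_plus_diag A m f e \<in> carrier_mat m m"
  by (simp add: principal_plus_diag_def)

lemma principal_plus_diag_cong:
  assumes "\<And>i. i < m \<Longrightarrow> e i = e' i"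
  shows "principal_plus_diag A m f e = principal_plus_diag A m f e'"
  using assms by (auto simp: principal_plus_diag_def)

lemma mat_delete_principal_plus_diag:
  assumes "k < m"
  shows "mat_delete (principal_plus_diag A m f e) k k
    = principal_plus_diag A (m - 1) (f \<circ> insert_index k) (e \<circ> insert_index k)"
  using assms by (intro eq_matI) (auto simp: mat_delete_def principal_plus_diag_def insert_index_def)

lemma det_principal_plus_diag_expand:
  assumes k: "k < m"
  shows "det (principal_plus_diag A m f e)
    = det (principal_plus_diag A m f (e(k := 0)))
      + e k * det (principal_plus_diag A (m - 1) (f \<circ> insert_index k) (e \<circ> insert_index k))"
proof -
  let ?X = "principal_plus_diag A m f e" and ?Y = "principal_plus_diag A m f (e(k := 0))"
  have same_cofactor: "cofactor ?X k j = cofactor ?Y k j" for j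
  proof -
    have "mat_delete ?X k j = mat_delete ?Y k j"
      by (intro eq_matI) (auto simp: mat_delete_def principal_plus_diag_def insert_index_def)
    then show ?thesis by (simp add: cofactor_def)
  qed
  have row_k: "?X $$ (k, j) = ?Y $$ (k, j) + (if j = k then e k else 0)" if "j < m" for j
    using k that by (simp add: principal_plus_diag_def)
  have "det ?X = (\<Sum>j<m. ?X $$ (k, j) * cofactor ?X k j)"
    by (rule laplace_expansion_row[OF principal_plus_diag_carrier k])
  also have "\<dots> = (\<Sum>j<m. ?Y $$ (k, j) * cofactor ?Y k j + (if j = k then e k * cofactor ?Y k k else 0))"
    by (intro sum.cong refl) (simp add: row_k same_cofactor distrib_right)
  also have "\<dots> = det ?Y + e k * cofactor ?Y k k"
    using k by (simp add: sum.distrib laplace_expansion_row[OF principal_plus_diag_carrier k])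
  also have "cofactor ?Y k k
      = det (principal_plus_diag A (m - 1) (f \<circ> insert_index k) (e \<circ> insert_index k))"
  proof -
    have "e(k := 0) \<circ> insert_index k = e \<circ> insert_index k"
      by (auto simp: insert_index_def)
    then show ?thesis
      using k by (simp add: cofactor_def mat_delete_principal_plus_diag)
  qed
  finally show ?thesis .
qed

lemma strict_mono_on_comp_insert_index:
  assumes "strict_mono_on {..<m} f" "k < m"
  shows "strict_mono_on {..<m - 1} (f \<circ> insert_index k)"
  using assms(2) by (intro strict_mono_onI)
    (auto simp: insert_index_def intro!: strict_mono_onD[OF assms(1)])

lemma insert_index_image_lessThan:
  assumes "k < m"
  shows "insert_index k ` {..<m - 1} = {..<m} - {k}"
  using insert_index_image[of k "m - 1"] assms by (simp add: atLeast0LessThan)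

lemma prod_insert_index:
  fixes e :: "nat \<Rightarrow> 'a :: comm_monoid_mult"
  assumes "k < m"
  shows "prod e {..<m} = e k * prod (e \<circ> insert_index k) {..<m - 1}"
proof -
  have "(\<Prod>i<m. e i) = e k * prod e ({..<m} - {k})"
    using assms by (simp add: prod.remove)
  also have "{..<m} - {k} = insert_index k ` {..<m - 1}"
    using insert_index_image_lessThan[OF assms] by simp
  also have "prod e \<dots> = prod (e \<circ> insert_index k) {..<m - 1}"
    by (simp add: prod.reindex insert_index_inj_on)
  finally show ?thesis .
qed

lemma image_comp_insert_index_subset:
  assumes "f ` {..<m} \<subseteq> S" "k < m"
  shows "(f \<circ> insert_index k) ` {..<m - 1} \<subseteq> S"
proof -
  have "(f \<circ> insert_index k) ` {..<m - 1} = f ` ({..<m} - {k})"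
    by (simp only: image_comp[symmetric] insert_index_image_lessThan[OF assms(2)])
  with assms(1) show ?thesis by blast
qed

lemma det_principal_plus_diag_vanishing_shifts:
  fixes A :: "'a :: linordered_idom mat"
  assumes "nonneg_principal_minors A n" "strict_mono_on {..<m} f" "f ` {..<m} \<subseteq> {..<n}"
    and "\<forall>i<m. e i = 0"
  shows "det (principal_plus_diag A m f e) \<ge> (\<Prod>i<m. e i)"
proof (cases "m = 0")
  case True
  then show ?thesis by (simp add: principal_plus_diag_def det_def)
next
  case False
  have "principal_plus_diag A m f e = principal_plus_diag A m f (\<lambda>_. 0)"
    using assms(4) by (intro principal_plus_diag_cong) simp
  then show ?thesis
    using assms False by (simp add: nonneg_principal_minors_def power_0_left)
qed

text \<open>Expanding in the shifts one at a time writes the determinant as a sum of principal minors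
  times products of shifts, all nonnegative; the term with all shifts is their product.\<close>
lemma det_principal_plus_diag_ge_prod:
  fixes A :: "'a :: linordered_idom mat"
  assumes "nonneg_principal_minors A n"
  shows "strict_mono_on {..<m} f \<Longrightarrow> f ` {..<m} \<subseteq> {..<n} \<Longrightarrow> \<forall>i. e i \<ge> 0
    \<Longrightarrow> \<forall>i. k \<le> i \<longrightarrow> i < m \<longrightarrow> e i = 0 \<Longrightarrow> det (principal_plus_diag A m f e) \<ge> (\<Prod>i<m. e i)"
proof (induction k arbitrary: m f e)
  case 0
  then show ?case
    by (intro det_principal_plus_diag_vanishing_shifts[OF assms]) auto
next
  case (Suc k)
  show ?case
  proof (cases "k < m")
    case False
    then show ?thesis
      using Suc.prems by (intro Suc.IH) auto
  next
    case True
    let ?f = "f \<circ> insert_index k" and ?e = "e \<circ> insert_index k"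
    have "det (principal_plus_diag A m f (e(k := 0))) \<ge> (\<Prod>i<m. (e(k := 0)) i)"
      using Suc.prems by (intro Suc.IH) (auto simp: le_Suc_eq)
    also have "(\<Prod>i<m. (e(k := 0)) i) = 0"
      using True by (simp add: prod_insert_index[OF True])
    finally have shift_dropped: "det (principal_plus_diag A m f (e(k := 0))) \<ge> 0" .
    have "det (principal_plus_diag A (m - 1) ?f ?e) \<ge> (\<Prod>i<m - 1. ?e i)"
    proof (rule Suc.IH)
      show "strict_mono_on {..<m - 1} ?f"
        by (rule strict_mono_on_comp_insert_index[OF Suc.prems(1) True])
      show "?f ` {..<m - 1} \<subseteq> {..<n}"
        by (rule image_comp_insert_index_subset[OF Suc.prems(2) True])
      show "\<forall>i. ?e i \<ge> 0"
        using Suc.prems(3) by simp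
      show "\<forall>i. k \<le> i \<longrightarrow> i < m - 1 \<longrightarrow> ?e i = 0"
        using Suc.prems(4) by (simp add: insert_index_def)
    qed
    then have "e k * det (principal_plus_diag A (m - 1) ?f ?e) \<ge> e k * (\<Prod>i<m - 1. ?e i)"
      by (rule mult_left_mono) (use Suc.prems(3) in blast)
    also have "e k * (\<Prod>i<m - 1. ?e i) = (\<Prod>i<m. e i)"
      by (rule prod_insert_index[OF True, symmetric])
    finally have "e k * det (principal_plus_diag A (m - 1) ?f ?e) \<ge> (\<Prod>i<m. e i)" .
    with shift_dropped show ?thesis
      using det_principal_plus_diag_expand[OF True, of A f e] by linarith
  qed
qed

lemma pick_image_strict_mono_on:
  assumes mono: "strict_mono_on {..<m} f" and "i < m"
  shows "pick (f ` {..<m}) i = f i"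
  using \<open>i < m\<close>
proof (induction i)
  case 0
  show ?case unfolding pick.simps
  proof (rule Least_equality)
    show "f 0 \<in> f ` {..<m}" using 0 by auto
  next
    fix y assume "y \<in> f ` {..<m}"
    then show "f 0 \<le> y" using strict_mono_on_leD[OF mono] by auto
  qed
next
  case (Suc i)
  show ?case unfolding pick.simps Suc.IH[OF Suc_lessD[OF Suc.prems]]
  proof (rule Least_equality)
    show "f (Suc i) \<in> f ` {..<m} \<and> f i < f (Suc i)"
      using Suc.prems strict_mono_onD[OF mono, of i "Suc i"] by auto
  next
    fix y assume "y \<in> f ` {..<m} \<and> f i < y"
    then obtain j where j: "j < m" "y = f j" "f i < f j" by auto
    have "i < j"
    proof (rule ccontr)
      assume "\<not> i < j"
      then have "f j \<le> f i"
        using strict_mono_on_leD[OF mono, of j i] j(1) Suc.prems by simp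
      with j(3) show False by simp
    qed
    then show "f (Suc i) \<le> y"
      using strict_mono_on_leD[OF mono, of "Suc i" j] j Suc.prems by simp
  qed
qed

lemma submatrix_image_strict_mono_on:
  assumes "A \<in> carrier_mat n n" "strict_mono_on {..<m} f" "f ` {..<m} \<subseteq> {..<n}"
  shows "submatrix A (f ` {..<m}) (f ` {..<m}) = principal_plus_diag A m f (\<lambda>_. 0)"
proof -
  let ?I = "f ` {..<m}"
  have "card ?I = m"
    using assms(2) by (simp add: card_image strict_mono_on_imp_inj_on)
  moreover have "{i. i < n \<and> i \<in> ?I} = ?I"
    using assms(3) by auto
  ultimately have card: "card {i. i < dim_row A \<and> i \<in> ?I} = m" "card {i. i < dim_col A \<and> i \<in> ?I} = m"
    using assms(1) by simp_all
  show ?thesis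
    by (rule eq_matI)
      (simp_all add: dim_submatrix card submatrix_index principal_plus_diag_def
        pick_image_strict_mono_on[OF assms(2)])
qed

lemma P0_matrix_imp_nonneg_principal_minors:
  assumes "P0_matrix A" "A \<in> carrier_mat n n"
  shows "nonneg_principal_minors A n"
  unfolding nonneg_principal_minors_def
proof (intro allI impI)
  fix m :: nat and f :: "nat \<Rightarrow> nat"
  assume "0 < m" "strict_mono_on {..<m} f" "f ` {..<m} \<subseteq> {..<n}"
  moreover from this have "f ` {..<m} \<subseteq> {0..<dim_row A}" "f ` {..<m} \<noteq> {}"
    using assms(2) by auto
  then have "det (submatrix A (f ` {..<m}) (f ` {..<m})) \<ge> 0"
    using assms(1) unfolding P0_matrix_def by blast
  ultimately show "det (principal_plus_diag A m f (\<lambda>_. 0)) \<ge> 0"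
    using submatrix_image_strict_mono_on[OF assms(2)] by simp
qed

lemma P0_matrix_eigenvalue_nonneg:
  assumes "P0_matrix A" "A \<in> carrier_mat n n" "eigenvalue A c"
  shows "c \<ge> 0"
proof (rule ccontr)
  assume "\<not> c \<ge> 0"
  have "char_matrix A c = principal_plus_diag A n id (\<lambda>_. - c)"
    using assms(2) by (intro eq_matI) (auto simp: char_matrix_def principal_plus_diag_def)
  moreover have "det (principal_plus_diag A n id (\<lambda>_. - c)) \<ge> (\<Prod>i<n. - c)"
    using \<open>\<not> c \<ge> 0\<close> P0_matrix_imp_nonneg_principal_minors[OF assms(1,2)]
    by (intro det_principal_plus_diag_ge_prod[where k = n]) (auto simp: strict_mono_on_def)
  moreover have "(\<Prod>i<n. - c) > 0"
    using \<open>\<not> c \<ge> 0\<close> by simp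
  ultimately have "det (char_matrix A c) \<noteq> 0" by simp
  then show False
    using assms(3) eigenvalue_det[OF assms(2)] by simp
qed

section \<open>The second additive compound on wedge products\<close>

definition wedge :: "'a :: comm_ring vec \<Rightarrow> 'a vec \<Rightarrow> nat \<times> nat \<Rightarrow> 'a" where
  "wedge x y = (\<lambda>(q, r). x $ q * y $ r - x $ r * y $ q)"

definition wedge_vec :: "nat \<Rightarrow> 'a :: comm_ring vec \<Rightarrow> 'a vec \<Rightarrow> 'a vec" where
  "wedge_vec n x y = vec (length (pairs2 n)) (\<lambda>l. wedge x y (pairs2 n ! l))"

lemma set_pairs2: "set (pairs2 n) = {(i, j). i < j \<and> j < n}"
  by (auto simp: pairs2_def image_iff)

lemma sum_list_concat: "sum_list (concat xss) = sum_list (map sum_list xss)"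
  by (induction xss) auto

lemma sum_pairs2:
  "(\<Sum>l<length (pairs2 n). g (pairs2 n ! l)) = (\<Sum>i<n. \<Sum>j\<in>{Suc i..<n}. g (i, j))"
proof -
  have "(\<Sum>l<length (pairs2 n). g (pairs2 n ! l)) = sum_list (map g (pairs2 n))"
    by (simp add: sum_list_sum_nth atLeast0LessThan)
  also have "\<dots> = (\<Sum>i<n. \<Sum>j\<in>{Suc i..<n}. g (i, j))"
    by (simp add: pairs2_def map_concat sum_list_concat o_def atLeast0LessThan
        sum_set_upt_conv_sum_list_nat[symmetric])
  finally show ?thesis .
qed

lemma sum_square_eq_twice_upper_triangle:
  fixes F :: "nat \<Rightarrow> nat \<Rightarrow> 'a :: comm_semiring_1"
  assumes "\<And>q r. F q r = F r q" and "\<And>q. F q q = 0"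
  shows "(\<Sum>q<n. \<Sum>r<n. F q r) = 2 * (\<Sum>q<n. \<Sum>r\<in>{Suc q..<n}. F q r)"
proof (induction n)
  case (Suc n)
  have "(\<Sum>q<n. \<Sum>r\<in>{Suc q..<Suc n}. F q r) = (\<Sum>q<n. (\<Sum>r\<in>{Suc q..<n}. F q r) + F q n)"
    by (intro sum.cong) auto
  then show ?case
    using Suc.IH assms by (simp add: sum.distrib algebra_simps mult_2)
qed simp

lemma sum_sum_delta:
  fixes g :: "nat \<Rightarrow> 'a :: comm_monoid_add"
  assumes "k < n"
  shows "(\<Sum>q<n. \<Sum>r<n. if r = k then g q else 0) = sum g {..<n}"
    and "(\<Sum>q<n. \<Sum>r<n. if q = k then g r else 0) = sum g {..<n}"
proof -
  have "(\<Sum>r<n. if q = k then g r else 0) = (if q = k then sum g {..<n} else 0)" for q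
    by simp
  then show "(\<Sum>q<n. \<Sum>r<n. if q = k then g r else 0) = sum g {..<n}"
    using assms by simp
qed (use assms in simp)

lemma sum_row_times_wedge:
  fixes M :: "'a :: comm_ring mat"
  assumes "M \<in> carrier_mat n n" "x \<in> carrier_vec n" "y \<in> carrier_vec n" "k < n"
  shows "(\<Sum>q<n. M $$ (k, q) * wedge x y (q, l)) = (M *\<^sub>v x) $ k * y $ l - x $ l * (M *\<^sub>v y) $ k"
  using assms
  by (simp add: wedge_def scalar_prod_def atLeast0LessThan algebra_simps sum_subtractf
      sum_distrib_left sum_distrib_right)

text \<open>Both factors of the summand are antisymmetric in \<open>(q, r)\<close>, so the sum is half of the
  unrestricted double sum, in which the Kronecker deltas of \<^const>\<open>compound2_entry\<close> collapse.\<close>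
lemma compound2_entry_wedge:
  fixes M :: "real mat"
  assumes M: "M \<in> carrier_mat n n" and x: "x \<in> carrier_vec n" and y: "y \<in> carrier_vec n"
    and ij: "i < n" "j < n"
  shows "(\<Sum>q<n. \<Sum>r\<in>{Suc q..<n}. compound2_entry M (i, j) (q, r) * wedge x y (q, r))
    = wedge (M *\<^sub>v x) y (i, j) + wedge x (M *\<^sub>v y) (i, j)"
proof -
  let ?w = "wedge x y"
  let ?F = "\<lambda>q r. compound2_entry M (i, j) (q, r) * ?w (q, r)"
  have split: "?F q r = (if r = j then M $$ (i, q) * ?w (q, j) else 0) - (if r = i then M $$ (j, q) * ?w (q, i) else 0)
      - (if q = i then M $$ (j, r) * ?w (r, i) else 0) + (if q = j then M $$ (i, r) * ?w (r, j) else 0)" for q r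
    by (auto simp: compound2_entry_def wedge_def algebra_simps)
  have "(\<Sum>q<n. \<Sum>r<n. ?F q r)
      = (\<Sum>q<n. M $$ (i, q) * ?w (q, j)) - (\<Sum>q<n. M $$ (j, q) * ?w (q, i))
        - (\<Sum>r<n. M $$ (j, r) * ?w (r, i)) + (\<Sum>r<n. M $$ (i, r) * ?w (r, j))"
    unfolding split sum.distrib sum_subtractf sum_sum_delta[OF ij(1)] sum_sum_delta[OF ij(2)] ..
  also have "\<dots> = 2 * (wedge (M *\<^sub>v x) y (i, j) + wedge x (M *\<^sub>v y) (i, j))"
    unfolding sum_row_times_wedge[OF M x y ij(1)] sum_row_times_wedge[OF M x y ij(2)]
    by (simp add: wedge_def algebra_simps)
  finally have "(\<Sum>q<n. \<Sum>r<n. ?F q r) = 2 * (wedge (M *\<^sub>v x) y (i, j) + wedge x (M *\<^sub>v y) (i, j))" .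
  moreover have "(\<Sum>q<n. \<Sum>r<n. ?F q r) = 2 * (\<Sum>q<n. \<Sum>r\<in>{Suc q..<n}. ?F q r)"
    by (rule sum_square_eq_twice_upper_triangle) (auto simp: compound2_entry_def wedge_def algebra_simps)
  ultimately show ?thesis by simp
qed

lemma compound2_carrier:
  "M \<in> carrier_mat n n \<Longrightarrow> compound2 M \<in> carrier_mat (length (pairs2 n)) (length (pairs2 n))"
  by (simp add: compound2_def Let_def)

lemma pairs2_nth:
  assumes "l < length (pairs2 n)"
  obtains i j where "pairs2 n ! l = (i, j)" "i < j" "j < n"
  using nth_mem[OF assms] unfolding set_pairs2 by auto

lemma compound2_mult_wedge_vec:
  fixes M :: "real mat"
  assumes M: "M \<in> carrier_mat n n" and x: "x \<in> carrier_vec n" and y: "y \<in> carrier_vec n"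
  shows "compound2 M *\<^sub>v wedge_vec n x y = wedge_vec n (M *\<^sub>v x) y + wedge_vec n x (M *\<^sub>v y)"
proof (rule eq_vecI)
  let ?P = "pairs2 n"
  fix l assume "l < dim_vec (wedge_vec n (M *\<^sub>v x) y + wedge_vec n x (M *\<^sub>v y))"
  then have l: "l < length ?P" by (simp add: wedge_vec_def)
  then obtain i j where ij: "?P ! l = (i, j)" "i < j" "j < n" by (rule pairs2_nth)
  have "(compound2 M *\<^sub>v wedge_vec n x y) $ l
      = (\<Sum>l'<length ?P. compound2_entry M (i, j) (?P ! l') * wedge x y (?P ! l'))"
    using l M ij(1) by (simp add: compound2_def Let_def wedge_vec_def scalar_prod_def atLeast0LessThan)
  also have "\<dots> = (\<Sum>q<n. \<Sum>r\<in>{Suc q..<n}. compound2_entry M (i, j) (q, r) * wedge x y (q, r))"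
    by (rule sum_pairs2)
  also have "\<dots> = wedge (M *\<^sub>v x) y (i, j) + wedge x (M *\<^sub>v y) (i, j)"
    using ij by (intro compound2_entry_wedge[OF M x y]) auto
  also have "\<dots> = (wedge_vec n (M *\<^sub>v x) y + wedge_vec n x (M *\<^sub>v y)) $ l"
    using l ij(1) by (simp add: wedge_vec_def)
  finally show "(compound2 M *\<^sub>v wedge_vec n x y) $ l = (wedge_vec n (M *\<^sub>v x) y + wedge_vec n x (M *\<^sub>v y)) $ l" .
qed (use M in \<open>simp add: compound2_def Let_def wedge_vec_def\<close>)

lemma wedge_vec_eq_0_iff:
  assumes "x \<in> carrier_vec n" "y \<in> carrier_vec n"
  shows "wedge_vec n x y = 0\<^sub>v (length (pairs2 n)) \<longleftrightarrow> (\<forall>p<n. \<forall>q<n. x $ p * y $ q = x $ q * y $ p)"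
proof
  assume zero: "wedge_vec n x y = 0\<^sub>v (length (pairs2 n))"
  have "x $ p * y $ q = x $ q * y $ p" if "p < q" "q < n" for p q
  proof -
    from that have "(p, q) \<in> set (pairs2 n)" by (simp add: set_pairs2)
    then obtain l where "l < length (pairs2 n)" "pairs2 n ! l = (p, q)"
      by (metis in_set_conv_nth)
    then show ?thesis
      using arg_cong[OF zero, of "\<lambda>w. w $ l"] by (simp add: wedge_vec_def wedge_def)
  qed
  then show "\<forall>p<n. \<forall>q<n. x $ p * y $ q = x $ q * y $ p"
    by (metis linorder_neqE_nat)
next
  assume "\<forall>p<n. \<forall>q<n. x $ p * y $ q = x $ q * y $ p"
  then show "wedge_vec n x y = 0\<^sub>v (length (pairs2 n))"
    by (intro eq_vecI) (auto simp: wedge_vec_def wedge_def elim!: pairs2_nth)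
qed

lemma wedge_vec_ne_0_of_rotation:
  fixes M :: "real mat"
  assumes M: "M \<in> carrier_mat n n" and x: "x \<in> carrier_vec n" and y: "y \<in> carrier_vec n"
    and nonzero: "x \<noteq> 0\<^sub>v n \<or> y \<noteq> 0\<^sub>v n" and "b \<noteq> 0"
    and Mx: "M *\<^sub>v x = a \<cdot>\<^sub>v x - b \<cdot>\<^sub>v y" and My: "M *\<^sub>v y = a \<cdot>\<^sub>v y + b \<cdot>\<^sub>v x"
  shows "wedge_vec n x y \<noteq> 0\<^sub>v (length (pairs2 n))"
proof
  assume "wedge_vec n x y = 0\<^sub>v (length (pairs2 n))"
  then have parallel: "x $ p * y $ q = x $ q * y $ p" if "p < n" "q < n" for p q
    using that wedge_vec_eq_0_iff[OF x y] by blast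
  have Mx_at: "(M *\<^sub>v x) $ i = a * x $ i - b * y $ i" and My_at: "(M *\<^sub>v y) $ i = a * y $ i + b * x $ i"
    if "i < n" for i
    using that x y by (simp_all add: Mx My)
  show False
  proof (cases "x = 0\<^sub>v n")
    case True
    have "y $ i = 0" if "i < n" for i
      using Mx_at[OF that] that M \<open>b \<noteq> 0\<close> by (simp add: True)
    then have "y = 0\<^sub>v n"
      using y by (intro eq_vecI) auto
    with True nonzero show False by simp
  next
    case False
    then obtain p where p: "p < n" "x $ p \<noteq> 0"
      using x by (metis carrier_vecD eq_vecI index_zero_vec(1,2))
    define c where "c = y $ p / x $ p"
    have "y = c \<cdot>\<^sub>v x"
      using x y p parallel[OF p(1)] by (intro eq_vecI) (auto simp: c_def field_simps)
    then have "M *\<^sub>v y = c \<cdot>\<^sub>v (M *\<^sub>v x)"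
      using M x by (simp add: mult_mat_vec)
    then have "(M *\<^sub>v y) $ p = c * (M *\<^sub>v x) $ p"
      using p(1) M by simp
    moreover have "y $ p = c * x $ p"
      using \<open>y = c \<cdot>\<^sub>v x\<close> p(1) x by simp
    ultimately have "a * (c * x $ p) + b * x $ p = c * (a * x $ p - b * (c * x $ p))"
      using Mx_at[OF p(1)] My_at[OF p(1)] by simp
    then have "b * x $ p * (1 + c\<^sup>2) = 0"
      by (simp add: algebra_simps power2_eq_square)
    moreover have "1 + c\<^sup>2 \<noteq> 0"
      using zero_le_power2[of c] by linarith
    ultimately show False
      using \<open>b \<noteq> 0\<close> p(2) by simp
  qed
qed

lemma mult_mat_vec_map_Re_Im:
  fixes M :: "real mat" and v :: "complex vec"
  assumes "M \<in> carrier_mat n n" "v \<in> carrier_vec n"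
  shows "M *\<^sub>v map_vec Re v = map_vec Re (map_mat complex_of_real M *\<^sub>v v)"
    and "M *\<^sub>v map_vec Im v = map_vec Im (map_mat complex_of_real M *\<^sub>v v)"
  using assms by (auto simp: scalar_prod_def)

lemma vec_eq_0_of_Re_Im:
  fixes v :: "complex vec"
  assumes "v \<in> carrier_vec n" "map_vec Re v = 0\<^sub>v n" "map_vec Im v = 0\<^sub>v n"
  shows "v = 0\<^sub>v n"
proof (rule eq_vecI)
  fix i assume "i < dim_vec (0\<^sub>v n :: complex vec)"
  then have "Re (v $ i) = map_vec Re v $ i" "Im (v $ i) = map_vec Im v $ i"
    using assms(1) by simp_all
  then show "v $ i = 0\<^sub>v n $ i"
    using \<open>i < dim_vec (0\<^sub>v n)\<close> by (simp add: assms(2,3) complex_eq_iff)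
qed (use assms(1) in simp)

lemma compound2_eigenvalue_of_nonreal:
  fixes M :: "real mat"
  assumes M: "M \<in> carrier_mat n n" and "eigenvalue (map_mat complex_of_real M) z" and "Im z \<noteq> 0"
  shows "eigenvalue (compound2 M) (2 * Re z)"
proof -
  obtain v where v: "v \<in> carrier_vec n" "v \<noteq> 0\<^sub>v n" "map_mat complex_of_real M *\<^sub>v v = z \<cdot>\<^sub>v v"
    using assms(2) M unfolding eigenvalue_def eigenvector_def by auto
  define x where "x = map_vec Re v"
  define y where "y = map_vec Im v"
  have xy: "x \<in> carrier_vec n" "y \<in> carrier_vec n"
    using v(1) by (simp_all add: x_def y_def)
  have Mx: "M *\<^sub>v x = Re z \<cdot>\<^sub>v x - Im z \<cdot>\<^sub>v y" and My: "M *\<^sub>v y = Re z \<cdot>\<^sub>v y + Im z \<cdot>\<^sub>v x"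
    unfolding x_def y_def mult_mat_vec_map_Re_Im[OF M v(1)] v(3)
    using v(1) by auto
  have "x \<noteq> 0\<^sub>v n \<or> y \<noteq> 0\<^sub>v n"
    using vec_eq_0_of_Re_Im[OF v(1)] v(2) by (auto simp: x_def y_def)
  then have "wedge_vec n x y \<noteq> 0\<^sub>v (length (pairs2 n))"
    using wedge_vec_ne_0_of_rotation[OF M xy _ \<open>Im z \<noteq> 0\<close> Mx My] by blast
  moreover have "compound2 M *\<^sub>v wedge_vec n x y = (2 * Re z) \<cdot>\<^sub>v wedge_vec n x y"
    unfolding compound2_mult_wedge_vec[OF M xy] Mx My
    using xy by (intro eq_vecI) (auto simp: wedge_vec_def wedge_def algebra_simps elim!: pairs2_nth)
  ultimately show ?thesis
    using M unfolding eigenvalue_def eigenvector_def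
    by (intro exI[of _ "wedge_vec n x y"]) (simp add: compound2_def Let_def wedge_vec_def)
qed

lemma eigenvalue_uminus_mat:
  assumes "A \<in> carrier_mat n n" "eigenvalue A c"
  shows "eigenvalue (- A) (- c)"
proof -
  obtain v where v: "v \<in> carrier_vec n" "v \<noteq> 0\<^sub>v n" "A *\<^sub>v v = c \<cdot>\<^sub>v v"
    using assms unfolding eigenvalue_def eigenvector_def by auto
  then have "(- A) *\<^sub>v v = (- c) \<cdot>\<^sub>v v"
    using assms(1) by (intro eq_vecI) auto
  with v assms(1) show ?thesis
    unfolding eigenvalue_def eigenvector_def by auto
qed

theorem lemma2p4:
  fixes M :: "real mat" and n :: nat
  assumes "M \<in> carrier_mat n n" and "n \<ge> 2"
  shows "(P0_matrix (compound2 M) \<longrightarrow>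
           (\<forall>z. eigenvalue (map_mat complex_of_real M) z \<and> Im z \<noteq> 0 \<longrightarrow> \<not> Re z < 0))
       \<and> (P0_matrix (- compound2 M) \<longrightarrow>
           (\<forall>z. eigenvalue (map_mat complex_of_real M) z \<and> Im z \<noteq> 0 \<longrightarrow> \<not> Re z > 0))"
proof -
  let ?C = "compound2 M" and ?L = "length (pairs2 n)"
  have C: "?C \<in> carrier_mat ?L ?L" and minus_C: "- ?C \<in> carrier_mat ?L ?L"
    using compound2_carrier[OF assms(1)] by simp_all
  have "0 \<le> 2 * Re z" if "P0_matrix ?C" "eigenvalue (map_mat complex_of_real M) z" "Im z \<noteq> 0" for z
    using that by (intro P0_matrix_eigenvalue_nonneg[OF _ C] compound2_eigenvalue_of_nonreal[OF assms(1)])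
  moreover have "0 \<le> - (2 * Re z)"
    if "P0_matrix (- ?C)" "eigenvalue (map_mat complex_of_real M) z" "Im z \<noteq> 0" for z
    using that
    by (intro P0_matrix_eigenvalue_nonneg[OF _ minus_C] eigenvalue_uminus_mat[OF C]
        compound2_eigenvalue_of_nonreal[OF assms(1)])
  ultimately show ?thesis by force
qed

end
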